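(* Let $F:\mathcal{P}(V,A)\to S_2(A)$ be a weakly viable, reducible consular election rule satisfying SPP and SPO. Then the range graph $\mathcal{G}(F)$ is a complete bipartite graph.
   Context: $V$ is a finite nonempty set of voters, $A$ a finite set of alternatives; a profile $P$ assigns to each voter $i$ a linear order $P_i$ on $A$; $P_i'P_{-i}$ replaces voter $i$'s order by $P_i'$; $P|_B$ is the profile of restrictions to $B\subseteq A$. $S_2(A)$ is the set of 2-element subsets of $A$; a consular election rule is a map $F:\mathcal{P}(V,A)\to S_2(A)$. SPO: for all $P$, $i$, $P_i'$, $\mathrm{best}(P_i,F(P))\succeq_i\mathrm{best}(P_i,F(P_i'P_{-i}))$; SPP: same with $\mathrm{worst}$, where $\mathrm{best}(P_i,W)$, $\mathrm{worst}(P_i,W)$ are the $P_i$-best and $P_i$-worst elements of $W$. Weakly viable: every $a\in A$ lies in $F(P)$ for some $P$. $F$ is reducible if there is a partition $A=B\uplus C$ and social choice functions $G:\mathcal{P}(V,B)\to B$, $H:\mathcal{P}(V,C)\to C$ with $F(P)=\{G(P|_B),H(P|_C)\}$ for all $P$. The range graph $\mathcal{G}(F)$ has vertex set $A$ and edge set equal to the range of $F$. *)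

theory Defs
  imports Main
begin

text \<open>A ballot is a relation r on alternatives; (x,y) \<in> r means the voter weakly
prefers x to y (x is ranked at least as high as y). A profile on alternative set A
assigns to each voter in V a linear order on A, and the empty relation to non-voters
(so that profiles are determined by the ballots of the voters in V).\<close>

definition profile :: "'v set \<Rightarrow> 'a set \<Rightarrow> ('v \<Rightarrow> 'a rel) \<Rightarrow> bool" where
  "profile V A P \<longleftrightarrow> (\<forall>i\<in>V. linear_order_on A (P i)) \<and> (\<forall>i. i \<notin> V \<longrightarrow> P i = {})"

definition restrict_profile :: "('v \<Rightarrow> 'a rel) \<Rightarrow> 'a set \<Rightarrow> ('v \<Rightarrow> 'a rel)" where
  "restrict_profile P B = (\<lambda>i. P i \<inter> (B \<times> B))"

definition S2 :: "'a set \<Rightarrow> 'a set set" where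
  "S2 A = {W. W \<subseteq> A \<and> card W = 2}"

definition best :: "'a rel \<Rightarrow> 'a set \<Rightarrow> 'a" where
  "best r W = (THE x. x \<in> W \<and> (\<forall>y\<in>W. (x, y) \<in> r))"

definition worst :: "'a rel \<Rightarrow> 'a set \<Rightarrow> 'a" where
  "worst r W = (THE x. x \<in> W \<and> (\<forall>y\<in>W. (y, x) \<in> r))"

definition consular_rule :: "'v set \<Rightarrow> 'a set \<Rightarrow> (('v \<Rightarrow> 'a rel) \<Rightarrow> 'a set) \<Rightarrow> bool" where
  "consular_rule V A F \<longleftrightarrow> (\<forall>P. profile V A P \<longrightarrow> F P \<in> S2 A)"

definition SPO :: "'v set \<Rightarrow> 'a set \<Rightarrow> (('v \<Rightarrow> 'a rel) \<Rightarrow> 'a set) \<Rightarrow> bool" where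
  "SPO V A F \<longleftrightarrow> (\<forall>P i Pi'. profile V A P \<longrightarrow> i \<in> V \<longrightarrow> linear_order_on A Pi' \<longrightarrow>
      (best (P i) (F P), best (P i) (F (P(i := Pi')))) \<in> P i)"

definition SPP :: "'v set \<Rightarrow> 'a set \<Rightarrow> (('v \<Rightarrow> 'a rel) \<Rightarrow> 'a set) \<Rightarrow> bool" where
  "SPP V A F \<longleftrightarrow> (\<forall>P i Pi'. profile V A P \<longrightarrow> i \<in> V \<longrightarrow> linear_order_on A Pi' \<longrightarrow>
      (worst (P i) (F P), worst (P i) (F (P(i := Pi')))) \<in> P i)"

definition weakly_viable :: "'v set \<Rightarrow> 'a set \<Rightarrow> (('v \<Rightarrow> 'a rel) \<Rightarrow> 'a set) \<Rightarrow> bool" where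
  "weakly_viable V A F \<longleftrightarrow> (\<forall>a\<in>A. \<exists>P. profile V A P \<and> a \<in> F P)"

definition reducible :: "'v set \<Rightarrow> 'a set \<Rightarrow> (('v \<Rightarrow> 'a rel) \<Rightarrow> 'a set) \<Rightarrow> bool" where
  "reducible V A F \<longleftrightarrow> (\<exists>B C (G :: ('v \<Rightarrow> 'a rel) \<Rightarrow> 'a) (H :: ('v \<Rightarrow> 'a rel) \<Rightarrow> 'a).
      B \<inter> C = {} \<and> B \<union> C = A \<and>
      (\<forall>Q. profile V B Q \<longrightarrow> G Q \<in> B) \<and>
      (\<forall>Q. profile V C Q \<longrightarrow> H Q \<in> C) \<and>
      (\<forall>P. profile V A P \<longrightarrow> F P = {G (restrict_profile P B), H (restrict_profile P C)}))"

definition range_edges :: "'v set \<Rightarrow> 'a set \<Rightarrow> (('v \<Rightarrow> 'a rel) \<Rightarrow> 'a set) \<Rightarrow> 'a set set" where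
  "range_edges V A F = {F P | P. profile V A P}"

definition complete_bipartite :: "'a set \<Rightarrow> 'a set set \<Rightarrow> bool" where
  "complete_bipartite A E \<longleftrightarrow> (\<exists>X Y. X \<inter> Y = {} \<and> X \<union> Y = A \<and> X \<noteq> {} \<and> Y \<noteq> {} \<and>
      E = {{x, y} | x y. x \<in> X \<and> y \<in> Y})"

end

theory Submission
  imports Defs
begin

text \<open>A reducible rule elects one alternative from each part
of a partition A = B \<union> C, profiles on B and on C can be chosen independently (stack every
ballot on B above every ballot on C), and weak viability forces each component rule to reach
every alternative of its part. Hence the range of F consists of all pairs {b, c} with b \<in> B
and c \<in> C, and B, C are nonempty because some profile exists.\<close>

lemma linear_order_on_Restr_subset:
  assumes "linear_order_on A r" "B \<subseteq> A"
  shows "linear_order_on B (Restr r B)"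
proof -
  have "refl_on B (Restr r B)" "total_on B (Restr r B)"
    using assms unfolding order_on_defs refl_on_def total_on_def by blast+
  moreover have "trans (Restr r B)" "antisym (Restr r B)"
    using assms(1) unfolding order_on_defs by (auto intro: trans_Restr antisym_subset)
  ultimately show ?thesis
    unfolding order_on_defs by blast
qed

lemma linear_order_on_Un_Times:
  assumes rb: "linear_order_on B rb" and rc: "linear_order_on C rc" and disj: "B \<inter> C = {}"
  shows "linear_order_on (B \<union> C) (rb \<union> rc \<union> B \<times> C)"
proof -
  have sub: "rb \<subseteq> B \<times> B" "rc \<subseteq> C \<times> C" and tr: "trans rb" "trans rc"
    and as: "antisym rb" "antisym rc"
    using rb rc by (simp_all add: order_on_defs)
  have "trans (rb \<union> rc \<union> B \<times> C)"
  proof (rule transI)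
    fix x y z assume "(x, y) \<in> rb \<union> rc \<union> B \<times> C" "(y, z) \<in> rb \<union> rc \<union> B \<times> C"
    then show "(x, z) \<in> rb \<union> rc \<union> B \<times> C"
      using sub disj transD[OF tr(1), of x y z] transD[OF tr(2), of x y z] by blast
  qed
  moreover have "antisym (rb \<union> rc \<union> B \<times> C)"
  proof (rule antisymI)
    fix x y assume "(x, y) \<in> rb \<union> rc \<union> B \<times> C" "(y, x) \<in> rb \<union> rc \<union> B \<times> C"
    then show "x = y"
      using sub disj antisymD[OF as(1), of x y] antisymD[OF as(2), of x y] by blast
  qed
  moreover have "refl_on (B \<union> C) (rb \<union> rc \<union> B \<times> C)" "total_on (B \<union> C) (rb \<union> rc \<union> B \<times> C)"
    using rb rc unfolding order_on_defs refl_on_def total_on_def by blast+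
  ultimately show ?thesis
    using sub unfolding order_on_defs by blast
qed

lemma profile_exists: "\<exists>P. profile V A P"
proof -
  obtain r where "well_order_on A r"
    using well_order_on by blast
  then have "profile V A (\<lambda>i. if i \<in> V then r else {})"
    unfolding profile_def well_order_on_def by simp
  then show ?thesis by blast
qed

lemma profile_restrict_profile:
  assumes "profile V A P" "B \<subseteq> A"
  shows "profile V B (restrict_profile P B)"
  using assms unfolding profile_def restrict_profile_def
  by (auto intro: linear_order_on_Restr_subset)

lemma profile_join:
  assumes Q: "profile V B Q" and R: "profile V C R" and disj: "B \<inter> C = {}"
  obtains P where "profile V (B \<union> C) P"
    and "restrict_profile P B = Q" and "restrict_profile P C = R"
proof
  let ?P = "\<lambda>i. if i \<in> V then Q i \<union> R i \<union> B \<times> C else {}"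
  show "profile V (B \<union> C) ?P"
    using Q R disj unfolding profile_def by (auto intro: linear_order_on_Un_Times)
  have QB: "Q i \<subseteq> B \<times> B" and RC: "R i \<subseteq> C \<times> C" for i
    using Q R unfolding profile_def order_on_defs by (cases "i \<in> V"; simp)+
  show "restrict_profile ?P B = Q"
  proof
    fix i show "restrict_profile ?P B i = Q i"
      using QB[of i] RC[of i] disj Q unfolding restrict_profile_def profile_def by auto
  qed
  show "restrict_profile ?P C = R"
  proof
    fix i show "restrict_profile ?P C i = R i"
      using QB[of i] RC[of i] disj R unfolding restrict_profile_def profile_def by auto
  qed
qed

lemma range_edges_split:
  assumes disj: "B \<inter> C = {}" and A: "B \<union> C = A"
    and F: "\<And>P. profile V A P \<Longrightarrow> F P = {G (restrict_profile P B), H (restrict_profile P C)}"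
  shows "range_edges V A F = {{G Q, H R} | Q R. profile V B Q \<and> profile V C R}"
proof (intro equalityI subsetI)
  fix e assume "e \<in> range_edges V A F"
  then obtain P where P: "profile V A P" and e: "e = F P"
    unfolding range_edges_def by blast
  have "profile V B (restrict_profile P B)" "profile V C (restrict_profile P C)"
    using P A by (auto intro: profile_restrict_profile)
  then show "e \<in> {{G Q, H R} | Q R. profile V B Q \<and> profile V C R}"
    unfolding e F[OF P] by blast
next
  fix e assume "e \<in> {{G Q, H R} | Q R. profile V B Q \<and> profile V C R}"
  then obtain Q R where QR: "profile V B Q" "profile V C R" and e: "e = {G Q, H R}"
    by blast
  obtain P where P: "profile V A P" and "restrict_profile P B = Q" "restrict_profile P C = R"
    by (rule profile_join[OF QR disj, unfolded A])
  then have "e = F P"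
    unfolding e F[OF P] by simp
  with P show "e \<in> range_edges V A F"
    unfolding range_edges_def by blast
qed

lemma doubletons_image_eq:
  "{{g x, h y} | x y. p x \<and> q y} = {{b, c} | b c. b \<in> g ` Collect p \<and> c \<in> h ` Collect q}"
  by blast

lemma weakly_viable_component_range:
  assumes viable: "weakly_viable V A F" and disj: "B \<inter> C = {}" and A: "B \<union> C = A"
    and G: "\<And>Q. profile V B Q \<Longrightarrow> G Q \<in> B" and H: "\<And>R. profile V C R \<Longrightarrow> H R \<in> C"
    and F: "\<And>P. profile V A P \<Longrightarrow> F P = {G (restrict_profile P B), H (restrict_profile P C)}"
  shows "G ` Collect (profile V B) = B"
proof (intro equalityI subsetI)
  fix b assume "b \<in> G ` Collect (profile V B)"
  then obtain Q where "profile V B Q" "b = G Q"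
    by blast
  then show "b \<in> B"
    using G by simp
next
  fix b assume b: "b \<in> B"
  then have "b \<in> A"
    using A by blast
  then obtain P where P: "profile V A P" and "b \<in> F P"
    using viable unfolding weakly_viable_def by blast
  have PB: "profile V B (restrict_profile P B)" and PC: "profile V C (restrict_profile P C)"
    using profile_restrict_profile[OF P] A by auto
  have "H (restrict_profile P C) \<noteq> b"
    using H[OF PC] b disj by blast
  with \<open>b \<in> F P\<close> have "b = G (restrict_profile P B)"
    unfolding F[OF P] by blast
  then show "b \<in> G ` Collect (profile V B)"
    using PB by simp
qed

theorem fact29:
  fixes V :: "'v set" and A :: "'a set" and F :: "('v \<Rightarrow> 'a rel) \<Rightarrow> 'a set"
  assumes "finite V" and "V \<noteq> {}" and "finite A"
    and "consular_rule V A F"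
    and viable: "weakly_viable V A F"
    and "reducible V A F"
    and "SPP V A F"
    and "SPO V A F"
  shows "complete_bipartite A (range_edges V A F)"
proof -
  obtain B C and G H :: "('v \<Rightarrow> 'a rel) \<Rightarrow> 'a" where disj: "B \<inter> C = {}" and A: "B \<union> C = A"
    and G: "\<And>Q. profile V B Q \<Longrightarrow> G Q \<in> B" and H: "\<And>R. profile V C R \<Longrightarrow> H R \<in> C"
    and F: "\<And>P. profile V A P \<Longrightarrow> F P = {G (restrict_profile P B), H (restrict_profile P C)}"
    using \<open>reducible V A F\<close> unfolding reducible_def by blast
  have F': "\<And>P. profile V A P \<Longrightarrow> F P = {H (restrict_profile P C), G (restrict_profile P B)}"
    using F by (simp add: insert_commute)
  have "C \<inter> B = {}" "C \<union> B = A"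
    using disj A by auto
  have range_G: "G ` Collect (profile V B) = B"
    by (rule weakly_viable_component_range[where G = G and H = H, OF viable disj A G H F])
  have range_H: "H ` Collect (profile V C) = C"
    by (rule weakly_viable_component_range[where G = H and H = G,
          OF viable \<open>C \<inter> B = {}\<close> \<open>C \<union> B = A\<close> H G F'])
  have "range_edges V A F = {{G Q, H R} | Q R. profile V B Q \<and> profile V C R}"
    using disj A F by (rule range_edges_split)
  also have "\<dots> = {{b, c} | b c. b \<in> B \<and> c \<in> C}"
    by (subst doubletons_image_eq) (simp only: range_G range_H)
  finally have "range_edges V A F = {{b, c} | b c. b \<in> B \<and> c \<in> C}" .
  moreover have "B \<noteq> {}" "C \<noteq> {}"
    using range_G range_H profile_exists[of V B] profile_exists[of V C] by auto
  ultimately show ?thesis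
    unfolding complete_bipartite_def using disj A by (intro exI[of _ B] exI[of _ C]) simp
qed

end
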